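(* Let $M^2$ be a surface in $\mathbb E^4$ all of whose points are flat ($k=\varkappa=0$ everywhere) and whose second fundamental form $\sigma$ vanishes at no point. Then at every point the vectors $\sigma(X,Y)$, $X,Y\in T_pM^2$, span a line in the normal space; let $b$ be a unit normal vector field spanning this line and $l$ a unit normal vector field orthogonal to $b$. For an orthonormal tangent frame $\{x,y\}$ put $\beta_1=g(\nabla'_xb,l)$, $\beta_2=g(\nabla'_yb,l)$ and $\beta=\beta_1^2+\beta_2^2$ (which does not depend on the choice of orthonormal tangent frame). Then at each point of $M^2$ either the Gauss curvature $K$ vanishes or $\beta$ vanishes.
   Context: $\mathbb E^4$ carries the standard metric $g$ and flat Levi-Civita connection $\nabla'$. For a surface $M^2$ parametrized by $z(u,v)$, with $E=g(z_u,z_u)$, $F=g(z_u,z_v)$, $G=g(z_v,z_v)$, $W=\sqrt{EG-F^2}$, second fundamental form $\sigma$, and an orthonormal normal frame $\{e_1,e_2\}$, write $\sigma(z_u,z_u)=c_{11}^1e_1+c_{11}^2e_2$, $\sigma(z_u,z_v)=c_{12}^1e_1+c_{12}^2e_2$, $\sigma(z_v,z_v)=c_{22}^1e_1+c_{22}^2e_2$; put $\Delta_1=c_{11}^1c_{12}^2-c_{11}^2c_{12}^1$, $\Delta_2=c_{11}^1c_{22}^2-c_{11}^2c_{22}^1$, $\Delta_3=c_{12}^1c_{22}^2-c_{12}^2c_{22}^1$, $L=2\Delta_1/W$, $M=\Delta_2/W$, $N=2\Delta_3/W$, and $k=\frac{LN-M^2}{EG-F^2}$, $\varkappa=\frac{EN+GL-2FM}{2(EG-F^2)}$.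 A point is flat if $k=\varkappa=0$ there (equivalently $L=M=N=0$). *)

theory Defs
  imports "HOL-Analysis.Analysis"
begin

type_synonym param = "real \<times> real"
type_synonym E4 = "real^4"

definition Du :: "(param \<Rightarrow> 'a::real_normed_vector) \<Rightarrow> param \<Rightarrow> 'a" where
  "Du f p = frechet_derivative f (at p) (1, 0)"
definition Dv :: "(param \<Rightarrow> 'a::real_normed_vector) \<Rightarrow> param \<Rightarrow> 'a" where
  "Dv f p = frechet_derivative f (at p) (0, 1)"

fun Ck :: "nat \<Rightarrow> param set \<Rightarrow> (param \<Rightarrow> 'a::real_normed_vector) \<Rightarrow> bool" where
  "Ck 0 U f = continuous_on U f"
| "Ck (Suc k) U f = (f differentiable_on U \<and> Ck k U (Du f) \<and> Ck k U (Dv f))"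

definition smooth_on :: "param set \<Rightarrow> (param \<Rightarrow> 'a::real_normed_vector) \<Rightarrow> bool" where
  "smooth_on U f = (\<forall>k. Ck k U f)"

definition regular_at :: "(param \<Rightarrow> E4) \<Rightarrow> param \<Rightarrow> bool" where
  "regular_at z p = (\<forall>a c. a *\<^sub>R Du z p + c *\<^sub>R Dv z p = 0 \<longrightarrow> a = 0 \<and> c = 0)"

definition coefE :: "(param \<Rightarrow> E4) \<Rightarrow> param \<Rightarrow> real" where
  "coefE z p = Du z p \<bullet> Du z p"
definition coefF :: "(param \<Rightarrow> E4) \<Rightarrow> param \<Rightarrow> real" where
  "coefF z p = Du z p \<bullet> Dv z p"
definition coefG :: "(param \<Rightarrow> E4) \<Rightarrow> param \<Rightarrow> real" where
  "coefG z p = Dv z p \<bullet> Dv z p"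
definition coefW :: "(param \<Rightarrow> E4) \<Rightarrow> param \<Rightarrow> real" where
  "coefW z p = sqrt (coefE z p * coefG z p - (coefF z p)^2)"

text \<open>Normal component of a vector w w.r.t. the tangent plane span{z_u, z_v}
  (w minus its orthogonal projection onto the tangent plane).\<close>
definition normal_part :: "(param \<Rightarrow> E4) \<Rightarrow> param \<Rightarrow> E4 \<Rightarrow> E4" where
  "normal_part z p w =
     (let E = coefE z p; F = coefF z p; G = coefG z p; d = E * G - F^2;
          a = (G * (w \<bullet> Du z p) - F * (w \<bullet> Dv z p)) / d;
          c = (E * (w \<bullet> Dv z p) - F * (w \<bullet> Du z p)) / d
      in w - (a *\<^sub>R Du z p + c *\<^sub>R Dv z p))"

definition sigma11 :: "(param \<Rightarrow> E4) \<Rightarrow> param \<Rightarrow> E4" where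
  "sigma11 z p = normal_part z p (Du (Du z) p)"
definition sigma12 :: "(param \<Rightarrow> E4) \<Rightarrow> param \<Rightarrow> E4" where
  "sigma12 z p = normal_part z p (Dv (Du z) p)"
definition sigma22 :: "(param \<Rightarrow> E4) \<Rightarrow> param \<Rightarrow> E4" where
  "sigma22 z p = normal_part z p (Dv (Dv z) p)"

definition is_normal :: "(param \<Rightarrow> E4) \<Rightarrow> param \<Rightarrow> E4 \<Rightarrow> bool" where
  "is_normal z p n = (n \<bullet> Du z p = 0 \<and> n \<bullet> Dv z p = 0)"

definition orthonormal_normal_frame :: "(param \<Rightarrow> E4) \<Rightarrow> param \<Rightarrow> E4 \<Rightarrow> E4 \<Rightarrow> bool" where
  "orthonormal_normal_frame z p e1 e2 =
     (is_normal z p e1 \<and> is_normal z p e2 \<and> e1 \<bullet> e1 = 1 \<and> e2 \<bullet> e2 = 1 \<and> e1 \<bullet> e2 = 0)"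

definition invL :: "(param \<Rightarrow> E4) \<Rightarrow> param \<Rightarrow> E4 \<Rightarrow> E4 \<Rightarrow> real" where
  "invL z p e1 e2 =
     2 * ((sigma11 z p \<bullet> e1) * (sigma12 z p \<bullet> e2) - (sigma11 z p \<bullet> e2) * (sigma12 z p \<bullet> e1))
       / coefW z p"
definition invM :: "(param \<Rightarrow> E4) \<Rightarrow> param \<Rightarrow> E4 \<Rightarrow> E4 \<Rightarrow> real" where
  "invM z p e1 e2 =
     ((sigma11 z p \<bullet> e1) * (sigma22 z p \<bullet> e2) - (sigma11 z p \<bullet> e2) * (sigma22 z p \<bullet> e1))
       / coefW z p"
definition invN :: "(param \<Rightarrow> E4) \<Rightarrow> param \<Rightarrow> E4 \<Rightarrow> E4 \<Rightarrow> real" where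
  "invN z p e1 e2 =
     2 * ((sigma12 z p \<bullet> e1) * (sigma22 z p \<bullet> e2) - (sigma12 z p \<bullet> e2) * (sigma22 z p \<bullet> e1))
       / coefW z p"

definition inv_k :: "(param \<Rightarrow> E4) \<Rightarrow> param \<Rightarrow> E4 \<Rightarrow> E4 \<Rightarrow> real" where
  "inv_k z p e1 e2 =
     (invL z p e1 e2 * invN z p e1 e2 - (invM z p e1 e2)^2)
       / (coefE z p * coefG z p - (coefF z p)^2)"
definition inv_kappa :: "(param \<Rightarrow> E4) \<Rightarrow> param \<Rightarrow> E4 \<Rightarrow> E4 \<Rightarrow> real" where
  "inv_kappa z p e1 e2 =
     (coefE z p * invN z p e1 e2 + coefG z p * invL z p e1 e2 - 2 * coefF z p * invM z p e1 e2)
       / (2 * (coefE z p * coefG z p - (coefF z p)^2))"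

text \<open>Flat point: k = kappa = 0 (computed with an orthonormal normal frame;
  the vanishing does not depend on the frame, we require it for every frame).\<close>
definition flat_point :: "(param \<Rightarrow> E4) \<Rightarrow> param \<Rightarrow> bool" where
  "flat_point z p = (\<forall>e1 e2. orthonormal_normal_frame z p e1 e2 \<longrightarrow>
                        inv_k z p e1 e2 = 0 \<and> inv_kappa z p e1 e2 = 0)"

text \<open>Gauss curvature via the Gauss equation:
  K = (<sigma(z_u,z_u), sigma(z_v,z_v)> - |sigma(z_u,z_v)|^2) / (EG - F^2).\<close>
definition gauss_K :: "(param \<Rightarrow> E4) \<Rightarrow> param \<Rightarrow> real" where
  "gauss_K z p =
     (sigma11 z p \<bullet> sigma22 z p - sigma12 z p \<bullet> sigma12 z p)
       / (coefE z p * coefG z p - (coefF z p)^2)"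

text \<open>Directional derivative (flat connection) of a vector field n along the tangent
  vector a1 z_u + a2 z_v.\<close>
definition nabla' :: "(param \<Rightarrow> E4) \<Rightarrow> param \<Rightarrow> real \<Rightarrow> real \<Rightarrow> E4" where
  "nabla' n p a1 a2 = a1 *\<^sub>R Du n p + a2 *\<^sub>R Dv n p"

end

theory Submission
  imports Defs
begin

(* At a regular point the normal space is a 2-plane.  In an
   orthonormal normal frame the flatness conditions k = kappa = 0 force L = M = N = 0, i.e. all
   2x2 minors of the coordinate matrix of sigma11, sigma12, sigma22 vanish; hence these three
   vectors are collinear, and since one of them is nonzero they span a line.

   Let n = z_u x z_v x b be the generalized cross product in
   R^4; it is a differentiable normal field orthogonal to b.  Since every sigma(z_i,z_j) is a
   multiple h_ij b of b, n is orthogonal to all second derivatives z_ij on U.  Differentiating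
   these identities and using the symmetry of third partial derivatives (Schwarz's theorem, proved
   below since the library lacks it) yields h11 <n,b_v> = h12 <n,b_u> and
   h12 <n,b_v> = h22 <n,b_u>.  As n is a nonzero multiple of l, either
   h11 h22 - h12^2 = 0, which by the Gauss equation means K = 0, or <b_u,l> = <b_v,l> = 0,
   whence beta_1 = beta_2 = 0 for every tangent frame. *)


lemma smooth_on_Du: "smooth_on U f \<Longrightarrow> smooth_on U (Du f)"
  and smooth_on_Dv: "smooth_on U f \<Longrightarrow> smooth_on U (Dv f)"
  unfolding smooth_on_def by (metis Ck.simps(2))+

lemma smooth_on_differentiable:
  "open U \<Longrightarrow> smooth_on U f \<Longrightarrow> q \<in> U \<Longrightarrow> f differentiable (at q)"
  unfolding smooth_on_def by (metis Ck.simps(2) differentiable_on_eq_differentiable_at)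


subsection \<open>Symmetry of mixed partial derivatives\<close>

lemma line_derivative:
  fixes f :: "'a::real_normed_vector \<Rightarrow> 'b::real_normed_vector"
  assumes "f differentiable (at (a + s *\<^sub>R e))"
  shows "((\<lambda>s. f (a + s *\<^sub>R e)) has_derivative
           (\<lambda>x. x *\<^sub>R frechet_derivative f (at (a + s *\<^sub>R e)) e)) (at s)"
proof -
  let ?q = "a + s *\<^sub>R e"
  have f': "(f has_derivative frechet_derivative f (at ?q)) (at ?q)"
    using assms frechet_derivative_works by blast
  have "((\<lambda>s. a + s *\<^sub>R e) has_derivative (\<lambda>x. x *\<^sub>R e)) (at s)"
    by (auto intro!: derivative_eq_intros)
  from diff_chain_at[OF this f'] show ?thesis
    using linear_cmul[OF has_derivative_linear[OF f']] by (simp add: o_def)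
qed

lemma norm_combination_le:
  fixes e k :: "'a::real_normed_vector"
  assumes "norm e \<le> 1" "norm k \<le> 1" "0 \<le> s" "0 \<le> t"
  shows "norm (s *\<^sub>R e + t *\<^sub>R k) \<le> s + t"
proof -
  have "norm (s *\<^sub>R e + t *\<^sub>R k) \<le> s * norm e + t * norm k"
    using norm_triangle_ineq[of "s *\<^sub>R e" "t *\<^sub>R k"] assms by simp
  also have "\<dots> \<le> s + t"
    using assms mult_left_le[of "norm e" s] mult_left_le[of "norm k" t] by linarith
  finally show ?thesis .
qed

text \<open>If A approximates the derivative of the directional derivative of f in direction e
  to within \<epsilon>, then the second difference of f in the directions e, k with step h
  equals h^2 A k up to an error 3 \<epsilon> h^2 (mean value theorem on one edge).\<close>
lemma mixed_second_difference:
  fixes f :: "real \<times> real \<Rightarrow> 'a::real_inner"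
  assumes fd: "\<And>q. q \<in> ball p r \<Longrightarrow> f differentiable (at q)"
    and A: "bounded_linear A" and ne: "norm e \<le> 1" "norm k \<le> 1"
    and approx: "\<forall>y. norm (y - p) < d \<longrightarrow>
      norm (frechet_derivative f (at y) e - frechet_derivative f (at p) e - A (y - p)) \<le> \<epsilon> * norm (y - p)"
    and h: "0 < h" "2*h < d" "2*h < r" and eps: "\<epsilon> \<ge> 0"
  shows "norm (f (p + h*\<^sub>R e + h*\<^sub>R k) - f (p + h*\<^sub>R e) - f (p + h*\<^sub>R k) + f p - (h*h) *\<^sub>R A k)
    \<le> 3*\<epsilon>*h*h"
proof -
  define fe where "fe q = frechet_derivative f (at q) e" for q
  define G where "G s = f (p + h*\<^sub>R k + s*\<^sub>R e) - f (p + s*\<^sub>R e) - s *\<^sub>R (h *\<^sub>R A k)" for s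
  define G' where "G' s = fe (p + h*\<^sub>R k + s*\<^sub>R e) - fe (p + s*\<^sub>R e) - h *\<^sub>R A k" for s
  have in_ball: "p + t*\<^sub>R k + s*\<^sub>R e \<in> ball p r" if "0 \<le> s" "s \<le> h" "0 \<le> t" "t \<le> h" for s t
    using norm_combination_le[OF ne, of s t] that h
    by (simp add: dist_norm norm_minus_commute add.commute)
  have dG: "(G has_derivative (\<lambda>x. x *\<^sub>R G' s)) (at s)" if "0 \<le> s" "s \<le> h" for s
  proof -
    have "((\<lambda>s. f (p + t*\<^sub>R k + s*\<^sub>R e)) has_derivative (\<lambda>x. x *\<^sub>R fe (p + t*\<^sub>R k + s*\<^sub>R e))) (at s)"
      if "t \<in> {0, h}" for t
      unfolding fe_def using that h \<open>0 \<le> s\<close> \<open>s \<le> h\<close>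
      by (intro line_derivative fd in_ball) auto
    from this[of h] this[of 0] show ?thesis
      unfolding G_def G'_def
      by (auto intro!: derivative_eq_intros simp: algebra_simps)
  qed
  have "continuous_on {0..h} G"
    by (rule has_derivative_continuous_on) (use dG in \<open>auto intro: has_derivative_at_withinI\<close>)
  then obtain \<xi> where xi: "\<xi> \<in> {0<..<h}" and mv: "norm (G h - G 0) \<le> norm (h *\<^sub>R G' \<xi>)"
    using mvt_general[OF h(1), of G "\<lambda>s x. x *\<^sub>R G' s"] dG by force
  have est: "norm (fe (p + t*\<^sub>R k + \<xi>*\<^sub>R e) - fe p - A (\<xi>*\<^sub>R e + t*\<^sub>R k)) \<le> \<epsilon> * (\<xi> + t)"
    if "0 \<le> t" "t \<le> h" for t
  proof -
    have n: "norm (\<xi>*\<^sub>R e + t*\<^sub>R k) \<le> \<xi> + t"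
      using norm_combination_le[OF ne, of \<xi> t] xi that by simp
    then have "norm (\<xi>*\<^sub>R e + t*\<^sub>R k) < d" using xi that h by auto
    then have "norm (fe (p + t*\<^sub>R k + \<xi>*\<^sub>R e) - fe p - A (\<xi>*\<^sub>R e + t*\<^sub>R k)) \<le> \<epsilon> * norm (\<xi>*\<^sub>R e + t*\<^sub>R k)"
      using approx[rule_format, of "p + t*\<^sub>R k + \<xi>*\<^sub>R e"] by (simp add: fe_def add_ac)
    also have "\<dots> \<le> \<epsilon> * (\<xi> + t)" using n eps by (simp add: mult_left_mono)
    finally show ?thesis .
  qed
  have "G' \<xi> = (fe (p + h*\<^sub>R k + \<xi>*\<^sub>R e) - fe p - A (\<xi>*\<^sub>R e + h*\<^sub>R k))
               - (fe (p + 0*\<^sub>R k + \<xi>*\<^sub>R e) - fe p - A (\<xi>*\<^sub>R e + 0*\<^sub>R k))"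
    using linear_add[OF bounded_linear.linear[OF A]] linear_cmul[OF bounded_linear.linear[OF A]]
    by (simp add: G'_def algebra_simps)
  then have "norm (G' \<xi>) \<le> \<epsilon> * (\<xi> + h) + \<epsilon> * (\<xi> + 0)"
    using est[of h] est[of 0] h norm_triangle_ineq4 by (smt (verit))
  also have "\<dots> \<le> 3 * \<epsilon> * h" using xi eps by (auto intro: mult_left_mono simp: algebra_simps)
  finally have "norm (G h - G 0) \<le> h * (3 * \<epsilon> * h)"
    using mv h by (smt (verit, best) mult_left_mono norm_scaleR)
  moreover have "G h - G 0 = f (p + h*\<^sub>R e + h*\<^sub>R k) - f (p + h*\<^sub>R e) - f (p + h*\<^sub>R k) + f p - (h*h) *\<^sub>R A k"
    by (simp add: G_def algebra_simps)
  ultimately show ?thesis by (simp add: algebra_simps)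
qed

lemma mixed_partials_commute:
  fixes f :: "real\<times>real \<Rightarrow> 'a::real_inner"
  assumes U: "open U" "p \<in> U" and fd: "\<And>q. q\<in>U \<Longrightarrow> f differentiable (at q)"
    and du: "Du f differentiable (at p)" and dv: "Dv f differentiable (at p)"
  shows "Dv (Du f) p = Du (Dv f) p"
proof -
  obtain A where A: "(Du f has_derivative A) (at p)" using du by (auto simp: differentiable_def)
  obtain B where B: "(Dv f has_derivative B) (at p)" using dv by (auto simp: differentiable_def)
  have bA: "bounded_linear A" and bB: "bounded_linear B"
    using A B has_derivative_bounded_linear by blast+
  obtain r where r: "r > 0" "ball p r \<subseteq> U" using U open_contains_ball by blast
  have fdb: "\<And>q. q \<in> ball p r \<Longrightarrow> f differentiable (at q)" using fd r by blast
  have close: "norm (A (0,1) - B (1,0)) \<le> 6 * \<epsilon>" if eps: "\<epsilon> > 0" for \<epsilon>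
  proof -
    obtain dA where dA: "dA > 0"
      "\<forall>y. norm (y - p) < dA \<longrightarrow> norm (Du f y - Du f p - A (y - p)) \<le> \<epsilon> * norm (y - p)"
      using A eps unfolding has_derivative_at_alt by blast
    obtain dB where dB: "dB > 0"
      "\<forall>y. norm (y - p) < dB \<longrightarrow> norm (Dv f y - Dv f p - B (y - p)) \<le> \<epsilon> * norm (y - p)"
      using B eps unfolding has_derivative_at_alt by blast
    define h where "h = min dA (min dB r) / 3"
    have h: "0 < h" "2*h < dA" "2*h < dB" "2*h < r" using dA dB r by (auto simp: h_def)
    define X where "X = f (p + h*\<^sub>R (1,0) + h*\<^sub>R (0,1)) - f (p + h*\<^sub>R (1,0)) - f (p + h*\<^sub>R (0,1)) + f p"
    have NA: "norm (X - (h*h) *\<^sub>R A (0,1)) \<le> 3*\<epsilon>*h*h"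
      unfolding X_def
      by (rule mixed_second_difference[OF fdb bA _ _ _ h(1) h(2) h(4)])
         (use dA eps in \<open>auto simp: Du_def\<close>)
    have NB: "norm (X - (h*h) *\<^sub>R B (1,0)) \<le> 3*\<epsilon>*h*h"
    proof -
      have "norm (f (p + h*\<^sub>R (0,1) + h*\<^sub>R (1,0)) - f (p + h*\<^sub>R (0,1)) - f (p + h*\<^sub>R (1,0)) + f p
              - (h*h) *\<^sub>R B (1,0)) \<le> 3*\<epsilon>*h*h"
        by (rule mixed_second_difference[OF fdb bB _ _ _ h(1) h(3) h(4)])
           (use dB eps in \<open>auto simp: Dv_def\<close>)
      moreover have "p + h*\<^sub>R (0,1) + h*\<^sub>R (1,0) = p + h*\<^sub>R (1,0) + h*\<^sub>R (0,1)"
        by (simp add: algebra_simps)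
      ultimately show ?thesis unfolding X_def by (simp add: algebra_simps)
    qed
    have "(h*h) * norm (A (0,1) - B (1,0))
        = norm ((X - (h*h) *\<^sub>R B (1,0)) - (X - (h*h) *\<^sub>R A (0,1)))"
      using h by (simp add: scaleR_diff_right[symmetric] abs_mult)
    also have "\<dots> \<le> norm (X - (h*h) *\<^sub>R B (1,0)) + norm (X - (h*h) *\<^sub>R A (0,1))"
      by (rule norm_triangle_ineq4)
    also have "\<dots> \<le> (h*h) * (6*\<epsilon>)" using NA NB by (simp add: algebra_simps)
    finally have "(h*h) * norm (A (0,1) - B (1,0)) \<le> (h*h) * (6*\<epsilon>)" .
    then show ?thesis using h by (simp add: mult_le_cancel_left_pos)
  qed
  have "A (0,1) = B (1,0)"
  proof (rule ccontr)
    assume "A (0,1) \<noteq> B (1,0)"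
    then have "norm (A (0,1) - B (1,0)) > 0" by simp
    with close[of "norm (A (0,1) - B (1,0)) / 12"] show False by simp
  qed
  then show ?thesis
    using frechet_derivative_at[OF A] frechet_derivative_at[OF B] by (simp add: Du_def Dv_def)
qed


lemma derivative_of_vanishing_inner:
  fixes f g :: "real \<times> real \<Rightarrow> 'a::real_inner"
  assumes U: "open U" "p \<in> U" and zero: "\<forall>q\<in>U. f q \<bullet> g q = 0"
    and df: "f differentiable (at p)" and dg: "g differentiable (at p)"
  shows "Du f p \<bullet> g p + f p \<bullet> Du g p = 0" "Dv f p \<bullet> g p + f p \<bullet> Dv g p = 0"
proof -
  define f' g' where "f' = frechet_derivative f (at p)" and "g' = frechet_derivative g (at p)"
  have "((\<lambda>q. f q \<bullet> g q) has_derivative (\<lambda>w. f p \<bullet> g' w + f' w \<bullet> g p)) (at p)"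
    using df dg unfolding f'_def g'_def frechet_derivative_works by (rule has_derivative_inner)
  moreover have "((\<lambda>q. f q \<bullet> g q) has_derivative (\<lambda>_. 0)) (at p)"
    by (rule has_derivative_transform_within_open[OF has_derivative_const U]) (use zero in auto)
  ultimately have "(\<lambda>w. f p \<bullet> g' w + f' w \<bullet> g p) = (\<lambda>_. 0)"
    by (rule has_derivative_unique)
  then show "Du f p \<bullet> g p + f p \<bullet> Du g p = 0" "Dv f p \<bullet> g p + f p \<bullet> Dv g p = 0"
    unfolding Du_def Dv_def f'_def[symmetric] g'_def[symmetric] fun_eq_iff by (simp_all add: add.commute)
qed

lemma exchanged_derivative:
  fixes n w1 w2 :: "real \<times> real \<Rightarrow> 'a::real_inner"
  assumes U: "open U" "p \<in> U"
    and "\<forall>q\<in>U. n q \<bullet> w1 q = 0" "\<forall>q\<in>U. n q \<bullet> w2 q = 0"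
    and "n differentiable (at p)" "w1 differentiable (at p)" "w2 differentiable (at p)"
    and "Dv w1 p = Du w2 p"
  shows "Dv n p \<bullet> w1 p = Du n p \<bullet> w2 p"
  using derivative_of_vanishing_inner(2)[OF U assms(3,5,6)]
    derivative_of_vanishing_inner(1)[OF U assms(4,5,7)] assms(8)
  by simp


subsection \<open>Tangent and normal spaces at a regular point\<close>

lemma regular_gram_pos:
  assumes "regular_at z p"
  shows "coefE z p * coefG z p - (coefF z p)^2 > 0"
proof -
  let ?u = "Du z p" and ?v = "Dv z p"
  have "(?u \<bullet> ?u) * (?v \<bullet> ?v) - (?u \<bullet> ?v)^2 \<noteq> 0"
  proof
    assume gram0: "(?u \<bullet> ?u) * (?v \<bullet> ?v) - (?u \<bullet> ?v)^2 = 0"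
    have "((?v \<bullet> ?v) *\<^sub>R ?u - (?u \<bullet> ?v) *\<^sub>R ?v) \<bullet> ((?v \<bullet> ?v) *\<^sub>R ?u - (?u \<bullet> ?v) *\<^sub>R ?v)
       = (?v \<bullet> ?v) * ((?u \<bullet> ?u) * (?v \<bullet> ?v) - (?u \<bullet> ?v)^2)"
      by (simp add: inner_diff_left inner_diff_right inner_commute power2_eq_square algebra_simps)
    then have "(?v \<bullet> ?v) *\<^sub>R ?u + (- (?u \<bullet> ?v)) *\<^sub>R ?v = 0" using gram0 by simp
    then have "?v \<bullet> ?v = 0" using assms unfolding regular_at_def by blast
    then have "?v = 0" by simp
    then show False
      using assms unfolding regular_at_def by (metis add_0 scaleR_zero_left scaleR_zero_right zero_neq_one)
  qed
  then show ?thesis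
    using Cauchy_Schwarz_ineq[of ?u ?v] unfolding coefE_def coefF_def coefG_def by linarith
qed

lemma normal_part_is_normal:
  assumes "regular_at z p"
  shows "is_normal z p (normal_part z p w)"
proof -
  let ?E = "coefE z p" and ?F = "coefF z p" and ?G = "coefG z p"
  have e: "Du z p \<bullet> Du z p = ?E" "Du z p \<bullet> Dv z p = ?F" "Dv z p \<bullet> Dv z p = ?G" "Dv z p \<bullet> Du z p = ?F"
    by (simp_all add: coefE_def coefF_def coefG_def inner_commute)
  define wu where "wu = w \<bullet> Du z p"
  define wv where "wv = w \<bullet> Dv z p"
  define d where "d = ?E * ?G - ?F^2"
  have d: "d \<noteq> 0" using regular_gram_pos[OF assms] by (simp add: d_def)
  have np: "normal_part z p w = w - (((?G*wu - ?F*wv)/d) *\<^sub>R Du z p + ((?E*wv - ?F*wu)/d) *\<^sub>R Dv z p)"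
    unfolding normal_part_def Let_def wu_def wv_def d_def by simp
  have "((?G*wu - ?F*wv)/d) * ?E + ((?E*wv - ?F*wu)/d) * ?F = wu"
       "((?G*wu - ?F*wv)/d) * ?F + ((?E*wv - ?F*wu)/d) * ?G = wv"
    using d by (simp_all add: field_simps) (simp_all add: d_def algebra_simps power2_eq_square)
  then show ?thesis
    unfolding is_normal_def np by (simp add: inner_diff_left inner_add_left e wu_def wv_def)
qed

text \<open>A vector differs from its normal part by a tangent vector; hence pairing with a vector
  orthogonal to the tangent plane only sees the normal part.\<close>
lemma pairing_with_normal_part:
  assumes "v \<bullet> Du z p = 0" "v \<bullet> Dv z p = 0" "normal_part z p w = h *\<^sub>R \<beta>"
  shows "v \<bullet> w = h * (v \<bullet> \<beta>)"
proof -
  obtain a c where "normal_part z p w = w - (a *\<^sub>R Du z p + c *\<^sub>R Dv z p)"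
    unfolding normal_part_def Let_def by blast
  then have "w = h *\<^sub>R \<beta> + a *\<^sub>R Du z p + c *\<^sub>R Dv z p" using assms(3) by (simp add: algebra_simps)
  then show ?thesis using assms(1,2) by (simp add: inner_add_right)
qed

definition normal_space :: "(param \<Rightarrow> E4) \<Rightarrow> param \<Rightarrow> E4 set" where
  "normal_space z p = {w. is_normal z p w}"

lemma subspace_normal_space: "subspace (normal_space z p)"
  unfolding subspace_def normal_space_def is_normal_def by (auto simp: inner_add_left)

text \<open>At a regular point the normal space is the orthogonal complement of the tangent plane,
  hence 2-dimensional.\<close>
lemma dim_normal_space:
  assumes reg: "regular_at z p"
  shows "dim (normal_space z p) = 2"
proof -
  let ?u = "Du z p" and ?v = "Dv z p"
  have indep: "\<And>a c. a *\<^sub>R ?u + c *\<^sub>R ?v = 0 \<Longrightarrow> a = 0 \<and> c = 0"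
    using reg by (simp add: regular_at_def)
  have complement: "{y \<in> UNIV. \<forall>x \<in> span {?u, ?v}. orthogonal x y} = normal_space z p"
    by (auto simp: normal_space_def is_normal_def orthogonal_def inner_commute
        intro: span_base orthogonal_to_span[unfolded orthogonal_def])
  have v0: "?v \<noteq> 0" using indep[of 0 1] by auto
  have u_notin: "?u \<notin> span {?v}"
  proof
    assume "?u \<in> span {?v}"
    then obtain k where "?u = k *\<^sub>R ?v" by (auto simp: span_singleton)
    then show False using indep[of 1 "-k"] by simp
  qed
  have "independent {?u, ?v}"
    by (intro independent_insertI[OF u_notin] independent_insertI independent_empty) (use v0 in simp)
  moreover have "?u \<noteq> ?v" using u_notin span_base by blast
  ultimately have "dim (span {?u, ?v}) = 2" by (simp add: dim_eq_card_independent)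
  moreover have "dim {y \<in> UNIV. \<forall>x \<in> span {?u, ?v}. orthogonal x y} + dim (span {?u, ?v})
      = dim (UNIV :: E4 set)"
    by (rule dim_subspace_orthogonal_to_vectors) auto
  ultimately show ?thesis using complement by simp
qed

lemma normal_frame_exists:
  assumes "regular_at z p"
  obtains e1 e2 where "orthonormal_normal_frame z p e1 e2"
proof -
  obtain B where B: "B \<subseteq> normal_space z p" "pairwise orthogonal B" "\<And>x. x \<in> B \<Longrightarrow> norm x = 1"
      "card B = dim (normal_space z p)"
    using orthonormal_basis_subspace[OF subspace_normal_space] by metis
  then obtain e1 e2 where "B = {e1, e2}" "e1 \<noteq> e2"
    using dim_normal_space[OF assms] by (auto simp: card_2_iff)
  with B have "orthonormal_normal_frame z p e1 e2"
    by (auto simp: orthonormal_normal_frame_def normal_space_def pairwise_def orthogonal_def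
        power2_norm_eq_inner[symmetric])
  then show ?thesis by (rule that)
qed

lemma normal_frame_coords:
  assumes reg: "regular_at z p" and frame: "orthonormal_normal_frame z p e1 e2"
    and w: "is_normal z p w"
  shows "w = (w \<bullet> e1) *\<^sub>R e1 + (w \<bullet> e2) *\<^sub>R e2"
proof -
  have e: "e1 \<bullet> e1 = 1" "e2 \<bullet> e2 = 1" "e1 \<bullet> e2 = 0" "e2 \<bullet> e1 = 0"
    using frame by (auto simp: orthonormal_normal_frame_def inner_commute)
  have sub: "{e1, e2} \<subseteq> normal_space z p"
    using frame by (auto simp: orthonormal_normal_frame_def normal_space_def)
  have ne: "e1 \<noteq> e2" using e by auto
  have "independent {e1, e2}"
    using e by (intro pairwise_orthogonal_independent) (auto simp: pairwise_def orthogonal_def)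
  then have "normal_space z p \<subseteq> span {e1, e2}"
    using ne by (intro card_ge_dim_independent[OF sub]) (simp_all add: dim_normal_space[OF reg])
  then obtain a c where "w - a *\<^sub>R e1 = c *\<^sub>R e2"
    using w by (auto simp: normal_space_def span_insert span_singleton)
  then have "w = a *\<^sub>R e1 + c *\<^sub>R e2" by (simp add: algebra_simps)
  then show ?thesis using e by (simp add: inner_add_left)
qed


subsection \<open>Flat points: sigma spans a line\<close>

lemma flat_forces_LMN_zero:
  fixes E F G L M N :: real
  assumes E: "E > 0" and G: "G > 0" and d: "E*G - F^2 > 0"
    and k: "L*N - M^2 = 0" and kappa: "E*N + G*L - 2*F*M = 0"
  shows "L = 0 \<and> M = 0 \<and> N = 0"
proof -
  have M2: "M^2 = L*N" using k by simp
  have s: "E*N + G*L = 2*F*M" using kappa by simp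
  have sq: "(E*N + G*L)^2 = 4*F^2*(L*N)" unfolding s M2[symmetric] by (simp add: power_mult_distrib)
  have "(E*N + G*L)^2 - 4*E*G*(L*N) = (E*N - G*L)^2"
    by (simp add: power2_eq_square algebra_simps)
  then have "(E*N + G*L)^2 - 4*E*G*(L*N) \<ge> 0" by simp
  then have "(L*N) * (E*G - F^2) \<le> 0" using sq by (simp add: algebra_simps)
  then have "L*N \<le> 0" using d by (simp add: mult_le_0_iff)
  moreover have "L*N \<ge> 0" using M2 by (metis zero_le_power2)
  ultimately have LN: "L*N = 0" by simp
  then have "M^2 = 0" using M2 by simp
  then have M: "M = 0" by simp
  then have "E*N + G*L = 0" using s by simp
  then show ?thesis using LN M E G by (auto simp: mult_eq_0_iff)
qed

lemma proportional_coords_parallel: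
  fixes e1 e2 :: "'a::real_vector"
  assumes v: "v = a *\<^sub>R e1 + b *\<^sub>R e2" "v \<noteq> 0" and w: "w = c *\<^sub>R e1 + d *\<^sub>R e2"
    and minor: "a * d - b * c = 0"
  shows "w \<in> span {v}"
proof -
  have ab: "a*a + b*b \<noteq> 0" using v by auto
  define t where "t = (a*c + b*d) / (a*a + b*b)"
  have "t * a = c" "t * b = d"
    using ab minor unfolding t_def by (simp_all add: field_simps)
  then have "w = t *\<^sub>R v" using v w by (simp add: algebra_simps)
  then show ?thesis by (auto intro: span_scale span_base)
qed

lemma rank_one_coords_dim_one:
  fixes e1 e2 s1 s2 s3 :: "'a::euclidean_space"
  assumes s: "s1 = x1 *\<^sub>R e1 + y1 *\<^sub>R e2" "s2 = x2 *\<^sub>R e1 + y2 *\<^sub>R e2" "s3 = x3 *\<^sub>R e1 + y3 *\<^sub>R e2"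
    and minors: "x1*y2 - y1*x2 = 0" "x1*y3 - y1*x3 = 0" "x2*y3 - y2*x3 = 0"
    and nz: "\<not> (s1 = 0 \<and> s2 = 0 \<and> s3 = 0)"
  shows "dim {s1, s2, s3} = 1"
proof -
  obtain v where v: "v \<in> {s1, s2, s3}" "v \<noteq> 0" "{s1, s2, s3} \<subseteq> span {v}"
  proof (cases "s1 = 0")
    case False
    have "s2 \<in> span {s1}" "s3 \<in> span {s1}"
      using minors by (auto intro!: proportional_coords_parallel[OF s(1) False] s)
    then show ?thesis using that[of s1] False by (auto intro: span_base)
  next
    case s1: True
    show ?thesis
    proof (cases "s2 = 0")
      case False
      have "s3 \<in> span {s2}"
        using minors by (auto intro!: proportional_coords_parallel[OF s(2) False] s)
      then show ?thesis using that[of s2] False s1 by (auto intro: span_base span_zero)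
    next
      case True
      then show ?thesis using that[of s3] s1 nz by (auto intro: span_base span_zero)
    qed
  qed
  have "dim {s1, s2, s3} \<le> dim (span {v})" by (rule dim_subset[OF v(3)])
  also have "\<dots> = 1" using v(2) by (simp add: dim_span)
  finally have "dim {s1, s2, s3} \<le> 1" .
  moreover have "dim {v} \<le> dim {s1, s2, s3}" by (rule dim_subset) (use v(1) in auto)
  ultimately show ?thesis using v(2) by simp
qed

lemma flat_point_sigma_line:
  assumes reg: "regular_at z p" and flat: "flat_point z p"
    and nz: "\<not> (sigma11 z p = 0 \<and> sigma12 z p = 0 \<and> sigma22 z p = 0)"
  shows "dim {sigma11 z p, sigma12 z p, sigma22 z p} = 1"
proof -
  let ?E = "coefE z p" and ?F = "coefF z p" and ?G = "coefG z p"
  obtain e1 e2 where frame: "orthonormal_normal_frame z p e1 e2"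
    using normal_frame_exists[OF reg] .
  have d: "?E * ?G - ?F^2 > 0" using regular_gram_pos[OF reg] .
  moreover have "?E * ?G > 0" using d by (smt (verit) zero_le_power2)
  then have "?E > 0" "?G > 0" by (auto simp: zero_less_mult_iff coefE_def coefG_def)
  moreover have "inv_k z p e1 e2 = 0" "inv_kappa z p e1 e2 = 0"
    using flat frame by (auto simp: flat_point_def)
  ultimately have "invL z p e1 e2 = 0 \<and> invM z p e1 e2 = 0 \<and> invN z p e1 e2 = 0"
    by (intro flat_forces_LMN_zero) (auto simp: inv_k_def inv_kappa_def)
  moreover have "coefW z p > 0" using d by (simp add: coefW_def)
  ultimately have minors:
    "(sigma11 z p \<bullet> e1) * (sigma12 z p \<bullet> e2) - (sigma11 z p \<bullet> e2) * (sigma12 z p \<bullet> e1) = 0"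
    "(sigma11 z p \<bullet> e1) * (sigma22 z p \<bullet> e2) - (sigma11 z p \<bullet> e2) * (sigma22 z p \<bullet> e1) = 0"
    "(sigma12 z p \<bullet> e1) * (sigma22 z p \<bullet> e2) - (sigma12 z p \<bullet> e2) * (sigma22 z p \<bullet> e1) = 0"
    by (auto simp: invL_def invM_def invN_def)
  have coords: "sigma11 z p = (sigma11 z p \<bullet> e1) *\<^sub>R e1 + (sigma11 z p \<bullet> e2) *\<^sub>R e2"
    "sigma12 z p = (sigma12 z p \<bullet> e1) *\<^sub>R e1 + (sigma12 z p \<bullet> e2) *\<^sub>R e2"
    "sigma22 z p = (sigma22 z p \<bullet> e1) *\<^sub>R e1 + (sigma22 z p \<bullet> e2) *\<^sub>R e2"
    unfolding sigma11_def sigma12_def sigma22_def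
    by (rule normal_frame_coords[OF reg frame normal_part_is_normal[OF reg]])+
  show ?thesis
    by (rule rank_one_coords_dim_one[OF coords _ _ _ nz])
       (use minors in \<open>simp_all add: algebra_simps\<close>)
qed


subsection \<open>The generalized cross product in R^4\<close>

text \<open>cross4 a b c is the vector with cross4 a b c \<bullet> w = det[a; b; c; w].\<close>
definition cross4 :: "real^4 \<Rightarrow> real^4 \<Rightarrow> real^4 \<Rightarrow> real^4" where
  "cross4 a b c = (\<chi> i.
     if i = 1 then - (a$2*(b$3*c$4 - b$4*c$3) - a$3*(b$2*c$4 - b$4*c$2) + a$4*(b$2*c$3 - b$3*c$2))
     else if i = 2 then a$1*(b$3*c$4 - b$4*c$3) - a$3*(b$1*c$4 - b$4*c$1) + a$4*(b$1*c$3 - b$3*c$1)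
     else if i = 3 then - (a$1*(b$2*c$4 - b$4*c$2) - a$2*(b$1*c$4 - b$4*c$1) + a$4*(b$1*c$2 - b$2*c$1))
     else a$1*(b$2*c$3 - b$3*c$2) - a$2*(b$1*c$3 - b$3*c$1) + a$3*(b$1*c$2 - b$2*c$1))"

text \<open>The cross product is orthogonal to each of its factors (a determinant with a repeated row).\<close>
lemma cross4_orthogonal:
  "cross4 a b c \<bullet> a = 0" "cross4 a b c \<bullet> b = 0" "cross4 a b c \<bullet> c = 0"
  by (simp_all add: cross4_def inner_vec_def sum_4 algebra_simps)

lemma cross4_gram:
  "cross4 a b c \<bullet> cross4 a b c =
     (a\<bullet>a) * ((b\<bullet>b)*(c\<bullet>c) - (b\<bullet>c)^2) - (a\<bullet>b) * ((a\<bullet>b)*(c\<bullet>c) - (b\<bullet>c)*(a\<bullet>c))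
     + (a\<bullet>c) * ((a\<bullet>b)*(b\<bullet>c) - (b\<bullet>b)*(a\<bullet>c))"
  unfolding cross4_def inner_vec_def sum_4 power2_eq_square by simp algebra

text \<open>The components of the cross product are polynomials in the components of its factors.\<close>
lemma differentiable_cross4:
  fixes f g h :: "'a::real_normed_vector \<Rightarrow> real^4"
  assumes "f differentiable (at p)" "g differentiable (at p)" "h differentiable (at p)"
  shows "(\<lambda>q. cross4 (f q) (g q) (h q)) differentiable (at p)"
proof -
  have component: "(\<lambda>q. u q $ i) differentiable (at p)" if "u differentiable (at p)"
    for u :: "'a \<Rightarrow> real^4" and i
    using that bounded_linear.has_derivative[OF bounded_linear_vec_nth] unfolding differentiable_def
    by blast
  note c = component[OF assms(1)] component[OF assms(2)] component[OF assms(3)]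
  have all: "\<forall>i. (\<lambda>q. cross4 (f q) (g q) (h q) $ i) differentiable (at p)"
    unfolding forall_4 cross4_def vec_lambda_beta
    by (simp del: One_nat_def)
       (intro conjI differentiable_add differentiable_diff differentiable_mult differentiable_minus c)+
  show ?thesis
  proof (subst differentiable_componentwise_within, intro ballI)
    fix i :: "real^4" assume "i \<in> Basis"
    then obtain j where "i = axis j 1" by (auto simp: Basis_vec_def)
    then show "(\<lambda>q. cross4 (f q) (g q) (h q) \<bullet> i) differentiable (at p)"
      using all by (simp add: inner_axis)
  qed
qed


subsection \<open>Codazzi-type relations\<close>

lemma cross_normal_orthogonal_second_derivatives:
  assumes U: "open U" and sz: "smooth_on U z"
    and hb: "\<forall>q\<in>U. sigma11 z q \<in> span {b q} \<and> sigma12 z q \<in> span {b q} \<and> sigma22 z q \<in> span {b q}"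
    and n_def: "n = (\<lambda>q. cross4 (Du z q) (Dv z q) (b q))"
  shows "\<forall>q\<in>U. n q \<bullet> Du (Du z) q = 0" "\<forall>q\<in>U. n q \<bullet> Dv (Du z) q = 0"
    "\<forall>q\<in>U. n q \<bullet> Du (Dv z) q = 0" "\<forall>q\<in>U. n q \<bullet> Dv (Dv z) q = 0"
proof -
  have annihilates: "n q \<bullet> w = 0" if in_line: "normal_part z q w \<in> span {b q}" for q w
  proof -
    obtain h where "normal_part z q w = h *\<^sub>R b q" using in_line by (auto simp: span_singleton)
    then show ?thesis
      using pairing_with_normal_part[of "n q" z q w h "b q"] by (simp add: n_def cross4_orthogonal)
  qed
  show "\<forall>q\<in>U. n q \<bullet> Du (Du z) q = 0" and uv: "\<forall>q\<in>U. n q \<bullet> Dv (Du z) q = 0"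
    and "\<forall>q\<in>U. n q \<bullet> Dv (Dv z) q = 0"
    using hb annihilates by (auto simp: sigma11_def sigma12_def sigma22_def)
  have "Dv (Du z) q = Du (Dv z) q" if "q \<in> U" for q
    using mixed_partials_commute[OF U that] smooth_on_differentiable[OF U] sz
      smooth_on_Du smooth_on_Dv that by blast
  then show "\<forall>q\<in>U. n q \<bullet> Du (Dv z) q = 0" using uv by simp
qed

text \<open>Differentiating these orthogonality relations and exchanging third partial derivatives
  yields the Codazzi-type relations between the coefficients of sigma along b and the
  derivatives of b paired with n.\<close>
lemma codazzi_relations:
  assumes U: "open U" and sz: "smooth_on U z" and sb: "smooth_on U b"
    and hb: "\<forall>q\<in>U. sigma11 z q \<in> span {b q} \<and> sigma12 z q \<in> span {b q} \<and> sigma22 z q \<in> span {b q}"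
    and p: "p \<in> U" and n_def: "n = (\<lambda>q. cross4 (Du z q) (Dv z q) (b q))"
    and h: "sigma11 z p = h11 *\<^sub>R b p" "sigma12 z p = h12 *\<^sub>R b p" "sigma22 z p = h22 *\<^sub>R b p"
  shows "h11 * (n p \<bullet> Dv b p) = h12 * (n p \<bullet> Du b p)"
    and "h12 * (n p \<bullet> Dv b p) = h22 * (n p \<bullet> Du b p)"
proof -
  have sm: "smooth_on U (Du z)" "smooth_on U (Dv z)" "smooth_on U (Du (Du z))" "smooth_on U (Dv (Du z))"
    "smooth_on U (Du (Dv z))" "smooth_on U (Dv (Dv z))"
    using sz smooth_on_Du smooth_on_Dv by blast+
  note diff = smooth_on_differentiable[OF U _ p]
  have dn: "n differentiable (at p)"
    unfolding n_def by (intro differentiable_cross4 diff sm sb)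
  have orth: "\<forall>q\<in>U. n q \<bullet> Du z q = 0" "\<forall>q\<in>U. n q \<bullet> Dv z q = 0" "\<forall>q\<in>U. n q \<bullet> b q = 0"
    by (simp_all add: n_def cross4_orthogonal)
  note second = cross_normal_orthogonal_second_derivatives[OF U sz hb n_def]
  note vanish = derivative_of_vanishing_inner[OF U p _ dn]
  have tangent: "Du n p \<bullet> Du z p = 0" "Du n p \<bullet> Dv z p = 0" "Dv n p \<bullet> Du z p = 0" "Dv n p \<bullet> Dv z p = 0"
    using vanish[OF orth(1) diff[OF sm(1)]] vanish[OF orth(2) diff[OF sm(2)]] second p by auto
  have along_b: "Du n p \<bullet> b p = - (n p \<bullet> Du b p)" "Dv n p \<bullet> b p = - (n p \<bullet> Dv b p)"
    using vanish[OF orth(3) diff[OF sb]] by (simp_all add: add_eq_0_iff)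
  have symmetric: "Dv (Du z) p = Du (Dv z) p"
    using mixed_partials_commute[OF U p smooth_on_differentiable[OF U sz] diff[OF sm(1)] diff[OF sm(2)]] .
  have normal_parts: "normal_part z p (Du (Du z) p) = h11 *\<^sub>R b p"
    "normal_part z p (Dv (Du z) p) = h12 *\<^sub>R b p" "normal_part z p (Du (Dv z) p) = h12 *\<^sub>R b p"
    "normal_part z p (Dv (Dv z) p) = h22 *\<^sub>R b p"
    using h symmetric by (auto simp: sigma11_def sigma12_def sigma22_def)
  have third: "Dv (Du (Du z)) p = Du (Dv (Du z)) p" "Dv (Du (Dv z)) p = Du (Dv (Dv z)) p"
    using mixed_partials_commute[OF U p, of "Du z"] mixed_partials_commute[OF U p, of "Dv z"]
      smooth_on_differentiable[OF U] sm p by blast+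
  have pair: "Du n p \<bullet> w = h * (Du n p \<bullet> b p)" "Dv n p \<bullet> w = h * (Dv n p \<bullet> b p)"
    if "normal_part z p w = h *\<^sub>R b p" for w h
    using pairing_with_normal_part[OF tangent(1,2) that] pairing_with_normal_part[OF tangent(3,4) that] .
  have "Dv n p \<bullet> Du (Du z) p = Du n p \<bullet> Dv (Du z) p"
    by (rule exchanged_derivative[OF U p second(1,2) dn diff[OF sm(3)] diff[OF sm(4)] third(1)])
  then show "h11 * (n p \<bullet> Dv b p) = h12 * (n p \<bullet> Du b p)"
    using pair[OF normal_parts(1)] pair[OF normal_parts(2)] along_b by simp
  have "Dv n p \<bullet> Du (Dv z) p = Du n p \<bullet> Dv (Dv z) p"
    by (rule exchanged_derivative[OF U p second(3,4) dn diff[OF sm(5)] diff[OF sm(6)] third(2)])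
  then show "h12 * (n p \<bullet> Dv b p) = h22 * (n p \<bullet> Du b p)"
    using pair[OF normal_parts(3)] pair[OF normal_parts(4)] along_b by simp
qed

text \<open>The two Codazzi-type relations say that (t, -s) is in the kernel of the matrix of sigma
  along b; a nonzero kernel vector forces its determinant to vanish.\<close>
lemma proportional_relations_force_zero:
  fixes h11 h12 h22 s t :: real
  assumes "h11 * t = h12 * s" "h12 * t = h22 * s"
  shows "h11 * h22 - h12 * h12 = 0 \<or> (s = 0 \<and> t = 0)"
proof -
  have "(h11 * h22 - h12 * h12) * t = h22 * (h11 * t) - h12 * (h12 * t)" by (simp add: algebra_simps)
  also have "\<dots> = 0" using assms by simp
  finally have "(h11 * h22 - h12 * h12) * t = 0" .
  moreover have "(h11 * h22 - h12 * h12) * s = h11 * (h12 * t) - h12 * (h11 * t)"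
    using assms by (simp add: algebra_simps)
  then have "(h11 * h22 - h12 * h12) * s = 0" by simp
  ultimately show ?thesis by (auto simp: mult_eq_0_iff)
qed

lemma gauss_curvature_or_normal_torsion_vanishes:
  assumes U: "open U" and sz: "smooth_on U z" and reg: "\<forall>q\<in>U. regular_at z q" and sb: "smooth_on U b"
    and hb: "\<forall>q\<in>U. is_normal z q (b q) \<and> b q \<bullet> b q = 1 \<and> sigma11 z q \<in> span {b q}
               \<and> sigma12 z q \<in> span {b q} \<and> sigma22 z q \<in> span {b q}"
    and p: "p \<in> U" and l: "is_normal z p l" "l \<bullet> l = 1" "l \<bullet> b p = 0"
  shows "gauss_K z p = 0 \<or> (Du b p \<bullet> l = 0 \<and> Dv b p \<bullet> l = 0)"
proof -
  define n where "n = (\<lambda>q. cross4 (Du z q) (Dv z q) (b q))"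
  have bp: "is_normal z p (b p)" "b p \<bullet> b p = 1" using hb p by auto
  have "\<exists>h. sigma z p = h *\<^sub>R b p" if "sigma \<in> {sigma11, sigma12, sigma22}" for sigma
    using that hb p by (auto simp: span_singleton)
  then obtain h11 h12 h22 where h: "sigma11 z p = h11 *\<^sub>R b p" "sigma12 z p = h12 *\<^sub>R b p"
      "sigma22 z p = h22 *\<^sub>R b p"
    by (metis insertCI)
  have gram_pos: "coefE z p * coefG z p - (coefF z p)^2 > 0"
    using regular_gram_pos reg p by blast
  text \<open>n is a nonzero normal vector orthogonal to b, hence a nonzero multiple of l.\<close>
  have "n p \<bullet> n p = coefE z p * coefG z p - (coefF z p)^2"
    using bp unfolding n_def cross4_gram
    by (simp add: is_normal_def coefE_def coefF_def coefG_def inner_commute power2_eq_square)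
  then have "n p \<noteq> 0" using gram_pos by auto
  have frame: "orthonormal_normal_frame z p (b p) l"
    using bp l by (simp add: orthonormal_normal_frame_def inner_commute)
  have "is_normal z p (n p)" by (simp add: is_normal_def n_def cross4_orthogonal)
  from normal_frame_coords[OF reg[rule_format, OF p] frame this] have "n p = (n p \<bullet> l) *\<^sub>R l"
    by (simp add: n_def cross4_orthogonal)
  then obtain c where c: "n p = c *\<^sub>R l" "c \<noteq> 0" using \<open>n p \<noteq> 0\<close> by (metis scaleR_zero_left)
  from codazzi_relations[OF U sz sb _ p n_def h] hb
  have "h11 * (Dv b p \<bullet> l) = h12 * (Du b p \<bullet> l)" "h12 * (Dv b p \<bullet> l) = h22 * (Du b p \<bullet> l)"
    using c by (auto simp: inner_commute)
  then have "h11 * h22 - h12 * h12 = 0 \<or> (Du b p \<bullet> l = 0 \<and> Dv b p \<bullet> l = 0)"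
    by (rule proportional_relations_force_zero)
  moreover have "gauss_K z p = (h11 * h22 - h12 * h12) / (coefE z p * coefG z p - (coefF z p)^2)"
    unfolding gauss_K_def h using bp by simp
  ultimately show ?thesis by auto
qed


theorem mainTheorem4:
  fixes z :: "real \<times> real \<Rightarrow> real^4" and U :: "(real \<times> real) set"
  assumes "open U"
    and "smooth_on U z"
    and "\<forall>p\<in>U. regular_at z p"
    and "\<forall>p\<in>U. flat_point z p"
    and "\<forall>p\<in>U. \<not> (sigma11 z p = 0 \<and> sigma12 z p = 0 \<and> sigma22 z p = 0)"
  shows "(\<forall>p\<in>U. dim {sigma11 z p, sigma12 z p, sigma22 z p} = 1)
    \<and> (\<forall>b l :: real \<times> real \<Rightarrow> real^4.
         smooth_on U b
         \<and> (\<forall>p\<in>U. is_normal z p (b p) \<and> b p \<bullet> b p = 1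
               \<and> sigma11 z p \<in> span {b p} \<and> sigma12 z p \<in> span {b p}
               \<and> sigma22 z p \<in> span {b p})
         \<and> (\<forall>p\<in>U. is_normal z p (l p) \<and> l p \<bullet> l p = 1 \<and> l p \<bullet> b p = 0)
       \<longrightarrow> (\<forall>p\<in>U. \<forall>a1 a2 c1 c2.
              (let x = a1 *\<^sub>R Du z p + a2 *\<^sub>R Dv z p;
                   y = c1 *\<^sub>R Du z p + c2 *\<^sub>R Dv z p
               in x \<bullet> x = 1 \<and> y \<bullet> y = 1 \<and> x \<bullet> y = 0)
              \<longrightarrow> (let beta1 = nabla' b p a1 a2 \<bullet> l p;
                       beta2 = nabla' b p c1 c2 \<bullet> l p
                   in gauss_K z p = 0 \<or> beta1^2 + beta2^2 = 0)))"
proof (intro conjI allI impI ballI)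
  fix p assume "p \<in> U"
  then show "dim {sigma11 z p, sigma12 z p, sigma22 z p} = 1"
    using flat_point_sigma_line assms(3-5) by blast
next
  fix b l :: "real \<times> real \<Rightarrow> real^4" and p a1 a2 c1 c2
  assume H: "smooth_on U b
         \<and> (\<forall>p\<in>U. is_normal z p (b p) \<and> b p \<bullet> b p = 1
               \<and> sigma11 z p \<in> span {b p} \<and> sigma12 z p \<in> span {b p} \<and> sigma22 z p \<in> span {b p})
         \<and> (\<forall>p\<in>U. is_normal z p (l p) \<and> l p \<bullet> l p = 1 \<and> l p \<bullet> b p = 0)"
    and p: "p \<in> U"
  then have "gauss_K z p = 0 \<or> (Du b p \<bullet> l p = 0 \<and> Dv b p \<bullet> l p = 0)"
    using gauss_curvature_or_normal_torsion_vanishes[OF assms(1-3), of b p "l p"] by blast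
  text \<open>beta_1 and beta_2 are linear combinations of the pairings of b_u and b_v with l.\<close>
  then show "let beta1 = nabla' b p a1 a2 \<bullet> l p; beta2 = nabla' b p c1 c2 \<bullet> l p
             in gauss_K z p = 0 \<or> beta1^2 + beta2^2 = 0"
    by (auto simp: Let_def nabla'_def inner_add_left)
qed

end
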